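(* Let $G=\mathbb T^{\mathbb Z}$ (product topology, $\mathbb T=\mathbb R/\mathbb Z$) and $S:G\to G$ the shift $S(x)(n)=x(n+1)$. Let $x=(a_n)_{n\in\mathbb Z}\in G$ where the reals $a_n$ ($n\in\mathbb Z$) together with $1$ are linearly independent over $\mathbb Q$. Then there is no metrizable SIN group $H$ containing $G$ as a topological subgroup together with $t\in H$ such that $txt^{-1}=S(x)$.
   Context: A topological group is SIN if every neighborhood of the identity contains a neighborhood $V$ of the identity with $gVg^{-1}=V$ for all $g$; a metrizable group is SIN iff it admits a compatible two-sided invariant metric. *)

theory Defs
  imports "HOL-Analysis.Analysis" "HOL-Algebra.Group"
begin

definition topological_group :: "('a, 'b) monoid_scheme \<Rightarrow> 'a topology \<Rightarrow> bool" where
  "topological_group H T \<longleftrightarrow>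
     group H \<and> topspace T = carrier H \<and>
     continuous_map (prod_topology T T) T (\<lambda>(a, b). a \<otimes>\<^bsub>H\<^esub> b) \<and>
     continuous_map T T (\<lambda>a. inv\<^bsub>H\<^esub> a)"

definition nbhd_one :: "('a, 'b) monoid_scheme \<Rightarrow> 'a topology \<Rightarrow> 'a set \<Rightarrow> bool" where
  "nbhd_one H T U \<longleftrightarrow> (\<exists>W. openin T W \<and> \<one>\<^bsub>H\<^esub> \<in> W \<and> W \<subseteq> U)"

definition SIN_group :: "('a, 'b) monoid_scheme \<Rightarrow> 'a topology \<Rightarrow> bool" where
  "SIN_group H T \<longleftrightarrow>
     (\<forall>U. U \<subseteq> topspace T \<and> nbhd_one H T U \<longrightarrow>
        (\<exists>V. nbhd_one H T V \<and> V \<subseteq> U \<and>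
             (\<forall>g\<in>carrier H. (\<lambda>v. g \<otimes>\<^bsub>H\<^esub> v \<otimes>\<^bsub>H\<^esub> inv\<^bsub>H\<^esub> g) ` V = V)))"

text \<open>The circle group \<T> = \<real>/\<int>, realised as the unit circle in \<complex> (isomorphic as a
  topological group via t \<mapsto> exp(2\<pi> i t)), and G = \<T>^\<int> with the product topology.\<close>
definition torus_Z :: "(int \<Rightarrow> complex) monoid" where
  "torus_Z = \<lparr>carrier = PiE UNIV (\<lambda>_. sphere (0::complex) 1),
              mult = (\<lambda>f g n. f n * g n), one = (\<lambda>_. 1)\<rparr>"

definition torus_Z_top :: "(int \<Rightarrow> complex) topology" where
  "torus_Z_top = product_topology (\<lambda>_. subtopology euclidean (sphere (0::complex) 1)) UNIV"

definition shift_Z :: "(int \<Rightarrow> complex) \<Rightarrow> (int \<Rightarrow> complex)" where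
  "shift_Z x = (\<lambda>n. x (n + 1))"

definition to_circle :: "real \<Rightarrow> complex" where
  "to_circle t = exp (2 * of_real pi * \<i> * of_real t)"

definition Q_indep_with_one :: "(int \<Rightarrow> real) \<Rightarrow> bool" where
  "Q_indep_with_one a \<longleftrightarrow>
     (\<forall>(F::int set) (c::int \<Rightarrow> rat) (c0::rat). finite F \<longrightarrow>
        of_rat c0 + (\<Sum>n\<in>F. of_rat (c n) * a n) = 0 \<longrightarrow> c0 = 0 \<and> (\<forall>n\<in>F. c n = 0))"

end

theory Submission
  imports Defs
begin

(* Let x = (e^{2 pi i a_n})_n in G = T^Z and suppose G sits in a metrizable SIN group H
   via a topological embedding phi, with t phi(x) t^-1 = phi(S x).  The proof has three parts.
   (1) Kronecker: since the a_n together with 1 are Q-linearly independent, the powers x^k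
       (k in Z) approximate any finitely many prescribed coordinates, i.e. the cyclic
       subgroup generated by x is dense in G.
   (2) Conjugation by t is a continuous endomorphism of H, so g |-> t phi(g) t^-1 and
       g |-> phi(S g) are continuous homomorphisms G -> H agreeing on x, hence on the
       dense subgroup generated by x; as H is Hausdorff they agree on all of G.
   (3) Hence conjugation by t realises the shift on phi(G).  In a SIN group take a
       conjugation-invariant identity neighbourhood V inside an open set W with
       W \<inter> phi(G) = phi {y. Re y(0) > 0}.  Its preimage in G is a shift-invariant
       neighbourhood of 1, but every such set contains a point y with y(0) = -1, since a
       basic neighbourhood constrains only finitely many coordinates. *)

lemma to_circle_cis: "to_circle t = cis (2 * pi * t)"
  unfolding to_circle_def cis_conv_exp by (simp add: mult_ac)

lemma norm_to_circle [simp]: "norm (to_circle t) = 1"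
  by (simp add: to_circle_cis)

lemma to_circle_diff_int: "to_circle (s - of_int m) = to_circle s"
proof -
  have "cis (2 * pi * of_int m) = 1"
    by (rule cis_multiple_2pi) simp
  then show ?thesis
    by (simp add: to_circle_cis right_diff_distrib cis_divide[symmetric])
qed

lemma to_circle_surj: assumes "y \<in> sphere (0::complex) 1" shows "\<exists>s. y = to_circle s"
proof -
  have "norm y = 1" using assms by simp
  then have "y \<noteq> 0" by auto
  with \<open>norm y = 1\<close> have "y = cis (Arg y)"
    using cis_Arg[of y] by (simp add: sgn_div_norm)
  then have "y = to_circle (Arg y / (2 * pi))" by (simp add: to_circle_cis)
  then show ?thesis by blast
qed

lemma to_circle_of_int_mult: "to_circle (of_int k * t) = to_circle t powi k"
  unfolding to_circle_def
  by (simp add: exp_power_int mult_ac)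

lemma openin_circle_contains_arc:
  assumes U: "openin (subtopology euclidean (sphere (0::complex) 1)) U" and y: "y \<in> U"
  shows "\<exists>\<beta> d. d > 0 \<and> (\<forall>s. \<bar>s - \<beta>\<bar> < d \<longrightarrow> to_circle s \<in> U)"
proof -
  obtain W where W: "open W" "U = W \<inter> sphere 0 1"
    using U by (auto simp: openin_subtopology openin_open)
  obtain \<beta> where \<beta>: "y = to_circle \<beta>" using to_circle_surj y W by blast
  have "continuous_on UNIV to_circle"
    unfolding to_circle_def by (intro continuous_intros)
  then have "open (to_circle -` W)"
    using W(1) by (simp add: continuous_on_open_vimage)
  moreover have "\<beta> \<in> to_circle -` W" using \<beta> y W by auto
  ultimately obtain d where d: "d > 0" "ball \<beta> d \<subseteq> to_circle -` W"
    by (meson open_contains_ball)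
  then have "\<forall>s. \<bar>s - \<beta>\<bar> < d \<longrightarrow> to_circle s \<in> U"
    using W d(2) by (auto simp: subset_iff dist_real_def abs_minus_commute)
  then show ?thesis using d(1) by blast
qed

lemma carrier_torus_Z: "carrier torus_Z = {f. \<forall>n. f n \<in> sphere 0 1}"
  by (auto simp: torus_Z_def PiE_UNIV_domain)

lemma topspace_torus_Z: "topspace torus_Z_top = carrier torus_Z"
  by (simp add: torus_Z_top_def torus_Z_def)

lemma one_torus_Z: "\<one>\<^bsub>torus_Z\<^esub> = (\<lambda>_. 1)"
  by (simp add: torus_Z_def)

lemma inverse_in_torus_Z: "f \<in> carrier torus_Z \<Longrightarrow> (\<lambda>n. inverse (f n)) \<in> carrier torus_Z"
  by (simp add: carrier_torus_Z norm_inverse)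

lemma torus_Z_nonzero: "f \<in> carrier torus_Z \<Longrightarrow> f n \<noteq> 0"
  unfolding carrier_torus_Z by (metis mem_Collect_eq mem_sphere_0 norm_zero zero_neq_one)

lemma group_torus_Z: "group torus_Z"
proof (rule groupI)
  fix f assume f: "f \<in> carrier torus_Z"
  show "\<exists>g\<in>carrier torus_Z. g \<otimes>\<^bsub>torus_Z\<^esub> f = \<one>\<^bsub>torus_Z\<^esub>"
    using inverse_in_torus_Z[OF f] torus_Z_nonzero[OF f]
    by (intro bexI[of _ "\<lambda>n. inverse (f n)"]) (auto simp: torus_Z_def)
qed (auto simp: carrier_torus_Z torus_Z_def norm_mult mult.assoc PiE_iff)

lemma torus_Z_int_pow:
  assumes f: "f \<in> carrier torus_Z"
  shows "f [^]\<^bsub>torus_Z\<^esub> (k::int) = (\<lambda>n. f n powi k)"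
proof -
  interpret group torus_Z by (rule group_torus_Z)
  have nat_pow: "g [^]\<^bsub>torus_Z\<^esub> (m::nat) = (\<lambda>n. g n ^ m)" for g m
    by (induction m) (auto simp: torus_Z_def)
  have inv: "inv\<^bsub>torus_Z\<^esub> g = (\<lambda>n. inverse (g n))" if "g \<in> carrier torus_Z" for g
  proof (rule inv_equality)
    show "(\<lambda>n. inverse (g n)) \<otimes>\<^bsub>torus_Z\<^esub> g = \<one>\<^bsub>torus_Z\<^esub>"
      using torus_Z_nonzero[OF that] by (simp add: torus_Z_def)
  qed (use that inverse_in_torus_Z in auto)
  show ?thesis
  proof (cases k rule: int_cases2)
    case (nonneg m)
    then show ?thesis by (simp add: int_pow_int nat_pow)
  next
    case (nonpos m)
    have "(\<lambda>n. f n ^ m) \<in> carrier torus_Z"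
      using f by (simp add: carrier_torus_Z norm_power)
    then show ?thesis
      using nonpos f by (simp add: int_pow_neg_int nat_pow inv power_int_minus)
  qed
qed

lemma shift_Z_carrier: "y \<in> carrier torus_Z \<Longrightarrow> shift_Z y \<in> carrier torus_Z"
  by (simp add: carrier_torus_Z shift_Z_def)

lemma shift_Z_hom: "shift_Z \<in> hom torus_Z torus_Z"
  by (rule homI) (auto simp: shift_Z_carrier shift_Z_def torus_Z_def)

lemma shift_Z_continuous: "continuous_map torus_Z_top torus_Z_top shift_Z"
  unfolding torus_Z_top_def shift_Z_def continuous_map_componentwise_UNIV
  by (auto intro: continuous_map_product_projection)

lemma funpow_shift_Z: "(shift_Z ^^ m) y = (\<lambda>n. y (n + int m))"
  by (induction m) (auto simp: shift_Z_def algebra_simps)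

lemma torus_Z_basic_nbhd:
  assumes "openin torus_Z_top W" "y \<in> W"
  obtains U where "finite {n. U n \<noteq> sphere 0 1}"
    "\<And>n. openin (subtopology euclidean (sphere (0::complex) 1)) (U n)"
    "y \<in> PiE UNIV U" "PiE UNIV U \<subseteq> W"
  using assms unfolding torus_Z_top_def openin_product_topology_alt by fastforce

subsection \<open>Density of the cyclic subgroup generated by \<open>x\<close>\<close>

lemma Q_indep_inj: assumes "Q_indep_with_one a" shows "inj a"
proof (rule injI, rule ccontr)
  fix n m assume "a n = a m" "n \<noteq> m"
  define c :: "int \<Rightarrow> rat" where "c = (\<lambda>i. if i = n then 1 else -1)"
  have "of_rat 0 + (\<Sum>i\<in>{n,m}. of_rat (c i) * a i) = 0"
    using \<open>a n = a m\<close> \<open>n \<noteq> m\<close> by (simp add: c_def)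
  with assms[unfolded Q_indep_with_one_def, rule_format, of "{n,m}" 0 c] show False
    by (simp add: c_def)
qed

lemma Q_indep_neq_one: assumes "Q_indep_with_one a" shows "a n \<noteq> 1"
proof
  assume "a n = 1"
  then have "of_rat (-1) + (\<Sum>i\<in>{n}. of_rat 1 * a i) = 0" by simp
  with assms[unfolded Q_indep_with_one_def, rule_format, of "{n}" "-1" "\<lambda>_. 1"] show False
    by simp
qed

text \<open>Linear independence over \<open>\<rat>\<close> is the same as over \<open>\<int>\<close>, in the module sense required by
  Kronecker's theorem in the library.\<close>
lemma Q_indep_independent:
  assumes Q: "Q_indep_with_one a"
  shows "module.independent (\<lambda>r (x::real). of_int r * x) (insert 1 (a ` F))"
proof -
  interpret Modules.module "\<lambda>r (x::real). of_int r * x"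
    by (simp add: Modules.module.intro distrib_left mult.commute)
  have inj: "inj a" by (rule Q_indep_inj[OF Q])
  have "independent (insert 1 (range a))"
    unfolding independent_explicit_module
  proof (intro allI impI)
    fix S u v assume S: "finite S" "S \<subseteq> insert 1 (range a)"
      and sum0: "(\<Sum>v\<in>S. of_int (u v) * v) = 0" and v: "v \<in> S"
    define I where "I = a -` S"
    have finI: "finite I" unfolding I_def using S(1) inj by (simp add: finite_vimageI)
    have Ssplit: "S = (S \<inter> {1}) \<union> a ` I" using S(2) unfolding I_def by auto
    have disj: "(S \<inter> {1}) \<inter> a ` I = {}" using Q_indep_neq_one[OF Q] by auto
    define c0 :: rat where "c0 = (if 1 \<in> S then of_int (u 1) else 0)"
    define c :: "int \<Rightarrow> rat" where "c = (\<lambda>n. of_int (u (a n)))"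
    have "(\<Sum>v\<in>S. of_int (u v) * v) =
          (\<Sum>v\<in>S \<inter> {1}. of_int (u v) * v) + (\<Sum>v\<in>a ` I. of_int (u v) * v)"
      by (subst Ssplit, rule sum.union_disjoint) (use S finI disj in auto)
    also have "(\<Sum>v\<in>S \<inter> {1}. of_int (u v) * v) = of_rat c0"
      by (cases "1 \<in> S") (auto simp: c0_def)
    also have "(\<Sum>v\<in>a ` I. of_int (u v) * v) = (\<Sum>n\<in>I. of_rat (c n) * a n)"
      by (subst sum.reindex) (use inj in \<open>auto simp: c_def inj_on_def\<close>)
    finally have "of_rat c0 + (\<Sum>n\<in>I. of_rat (c n) * a n) = 0" using sum0 by simp
    with Q[unfolded Q_indep_with_one_def, rule_format, OF finI]
    have "c0 = 0" "\<And>n. n \<in> I \<Longrightarrow> c n = 0" by auto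
    then show "u v = 0"
      using v S(2) by (cases "v = 1") (auto simp: c0_def c_def I_def)
  qed
  then show ?thesis by (rule independent_mono) auto
qed

text \<open>Kronecker's simultaneous approximation theorem for a family indexed by an arbitrary
  finite set (the library version indexes it by an initial segment of \<open>\<nat>\<close>).\<close>
lemma Kronecker_finite_family:
  fixes \<theta> b :: "'i \<Rightarrow> real"
  assumes F: "finite F" and inj: "inj_on \<theta> F" and one: "1 \<notin> \<theta> ` F"
    and indep: "module.independent (\<lambda>r (x::real). of_int r * x) (insert 1 (\<theta> ` F))"
    and "\<epsilon> > 0"
  obtains k :: int and m :: "'i \<Rightarrow> int"
    where "\<And>n. n \<in> F \<Longrightarrow> \<bar>of_int k * \<theta> n - of_int (m n) - b n\<bar> < \<epsilon>"
proof -
  define N where "N = card F"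
  obtain e where e: "bij_betw e {..<N} F"
    using ex_bij_betw_nat_finite[OF F] by (auto simp: N_def atLeast0LessThan)
  define \<theta>' where "\<theta>' = (\<lambda>i. if i < N then \<theta> (e i) else 1)"
  have image: "\<theta>' ` {..N} = insert 1 (\<theta> ` F)"
  proof -
    have "{..N} = insert N {..<N}" by auto
    then show ?thesis
      using e by (auto simp: \<theta>'_def bij_betw_def image_image cong: image_cong)
  qed
  have "inj_on \<theta>' {..N}"
  proof -
    have "inj_on \<theta>' {..<N}"
      using e inj by (auto simp: \<theta>'_def bij_betw_def inj_on_def)
    moreover have "\<theta>' N \<notin> \<theta>' ` {..<N}"
      using e one by (auto simp: \<theta>'_def bij_betw_def)
    moreover have "{..N} = insert N {..<N}" by auto
    ultimately show ?thesis by simp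
  qed
  moreover have "\<theta>' N = 1" by (simp add: \<theta>'_def)
  ultimately obtain k m where km:
    "\<And>i. i < N \<Longrightarrow> \<bar>of_int k * \<theta>' i - of_int (m i) - b (e i)\<bar> < \<epsilon>"
    using Kronecker_thm_2[of \<theta>' N \<epsilon> "b \<circ> e"] indep image \<open>\<epsilon> > 0\<close> by auto
  have "\<bar>of_int k * \<theta> n - of_int (m (inv_into {..<N} e n)) - b n\<bar> < \<epsilon>" if n: "n \<in> F" for n
  proof -
    obtain i where i: "i < N" "e i = n" using e n by (auto simp: bij_betw_def)
    then have "inv_into {..<N} e n = i" using e by (auto simp: bij_betw_def)
    then show ?thesis using km[OF i(1)] i by (simp add: \<theta>'_def)
  qed
  then show ?thesis by (rule that)
qed

lemma dense_cyclic_subgroup: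
  assumes Q: "Q_indep_with_one a"
  shows "torus_Z_top closure_of range (\<lambda>k::int. (\<lambda>n. to_circle (a n)) [^]\<^bsub>torus_Z\<^esub> k)
         = topspace torus_Z_top"
  unfolding dense_intersects_open
proof (intro allI impI)
  fix W assume W: "openin torus_Z_top W \<and> W \<noteq> {}"
  then obtain y where "y \<in> W" by blast
  with W obtain U where U: "finite {n. U n \<noteq> sphere 0 1}"
    "\<And>n. openin (subtopology euclidean (sphere (0::complex) 1)) (U n)"
    "y \<in> PiE UNIV U" "PiE UNIV U \<subseteq> W"
    using torus_Z_basic_nbhd by blast
  define F where "F = {n. U n \<noteq> sphere 0 1}"
  have "\<forall>n. \<exists>\<beta> d. d > 0 \<and> (\<forall>s. \<bar>s - \<beta>\<bar> < d \<longrightarrow> to_circle s \<in> U n)"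
    using openin_circle_contains_arc[OF U(2)] U(3) by (blast intro: PiE_mem)
  then obtain \<beta> d where arc: "\<And>n. d n > 0" "\<And>n s. \<bar>s - \<beta> n\<bar> < d n \<Longrightarrow> to_circle s \<in> U n"
    by metis
  define \<epsilon> where "\<epsilon> = Min (insert 1 (d ` F))"
  have finF: "finite F" using U(1) by (simp add: F_def)
  have \<epsilon>: "\<epsilon> > 0" unfolding \<epsilon>_def using finF arc(1) by auto
  have inj: "inj_on a F" using Q_indep_inj[OF Q] by (simp add: inj_on_def inj_def)
  have one: "1 \<notin> a ` F" using Q_indep_neq_one[OF Q] by auto
  obtain k m where km: "\<And>n. n \<in> F \<Longrightarrow> \<bar>of_int k * a n - of_int (m n) - \<beta> n\<bar> < \<epsilon>"
    using Kronecker_finite_family[OF finF inj one Q_indep_independent[OF Q] \<epsilon>] by blast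
  have "(\<lambda>n. to_circle (of_int k * a n)) \<in> PiE UNIV U"
  proof (rule PiE_I)
    fix n
    show "to_circle (of_int k * a n) \<in> U n"
    proof (cases "n \<in> F")
      case True
      have "\<epsilon> \<le> d n" unfolding \<epsilon>_def using finF True by auto
      then have "to_circle (of_int k * a n - of_int (m n)) \<in> U n"
        using km[OF True] by (intro arc(2)) linarith
      then show ?thesis by (simp add: to_circle_diff_int)
    next
      case False then show ?thesis by (simp add: F_def)
    qed
  qed simp
  moreover have "(\<lambda>n. to_circle (a n)) [^]\<^bsub>torus_Z\<^esub> k = (\<lambda>n. to_circle (of_int k * a n))"
    by (simp add: torus_Z_int_pow carrier_torus_Z to_circle_of_int_mult)
  ultimately have "(\<lambda>n. to_circle (a n)) [^]\<^bsub>torus_Z\<^esub> k \<in> W"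
    using U(4) by auto
  then show "range (\<lambda>k::int. (\<lambda>n. to_circle (a n)) [^]\<^bsub>torus_Z\<^esub> k) \<inter> W \<noteq> {}"
    by blast
qed

subsection \<open>Conjugation in a topological group\<close>

lemma continuous_map_group_mult:
  assumes "topological_group H T" "continuous_map X T f" "continuous_map X T g"
  shows "continuous_map X T (\<lambda>x. f x \<otimes>\<^bsub>H\<^esub> g x)"
proof -
  have "continuous_map X T ((\<lambda>(a, b). a \<otimes>\<^bsub>H\<^esub> b) \<circ> (\<lambda>x. (f x, g x)))"
    using assms by (intro continuous_map_compose[where X' = "prod_topology T T"] continuous_map_pairedI)
      (auto simp: topological_group_def)
  then show ?thesis by (simp add: o_def)
qed

lemma conjugation_continuous:
  assumes TG: "topological_group H T" and t: "t \<in> carrier H"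
  shows "continuous_map T T (\<lambda>g. t \<otimes>\<^bsub>H\<^esub> g \<otimes>\<^bsub>H\<^esub> inv\<^bsub>H\<^esub> t)"
proof -
  have "group H" and top: "topspace T = carrier H"
    using TG by (auto simp: topological_group_def)
  then have "t \<in> topspace T" "inv\<^bsub>H\<^esub> t \<in> topspace T"
    using t by auto
  then show ?thesis
    by (intro continuous_map_group_mult[OF TG]) (auto intro: continuous_map_id[unfolded id_def])
qed

lemma conjugation_hom:
  fixes H (structure)
  assumes "group H" and t: "t \<in> carrier H"
  shows "(\<lambda>g. t \<otimes> g \<otimes> inv t) \<in> hom H H"
proof -
  interpret group H by fact
  have cancel: "inv t \<otimes> (t \<otimes> z) = z" if "z \<in> carrier H" for z
    using that t by (simp add: m_assoc[symmetric])
  show ?thesis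
  proof (rule homI)
    fix g h assume "g \<in> carrier H" "h \<in> carrier H"
    then show "t \<otimes> (g \<otimes> h) \<otimes> inv t = (t \<otimes> g \<otimes> inv t) \<otimes> (t \<otimes> h \<otimes> inv t)"
      using t by (simp add: m_assoc cancel)
  qed (use t in simp)
qed

lemma continuous_homs_agree_on_dense_cyclic:
  assumes "group G" "group H" and hom: "f \<in> hom G H" "g \<in> hom G H"
    and cont: "continuous_map X Y f" "continuous_map X Y g" and "Hausdorff_space Y"
    and x: "x \<in> carrier G" and dense: "X closure_of range (\<lambda>k::int. x [^]\<^bsub>G\<^esub> k) = topspace X"
    and fx: "f x = g x" and y: "y \<in> topspace X"
  shows "f y = g y"
proof (rule forall_in_closure_of_eq[OF _ \<open>Hausdorff_space Y\<close> cont])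
  show "y \<in> X closure_of range (\<lambda>k::int. x [^]\<^bsub>G\<^esub> k)" using dense y by simp
  show "f z = g z" if "z \<in> range (\<lambda>k::int. x [^]\<^bsub>G\<^esub> k)" for z
    using that fx hom_int_pow[OF hom(1) x assms(1,2)] hom_int_pow[OF hom(2) x assms(1,2)] by auto
qed

subsection \<open>Shift-invariant neighbourhoods of the identity\<close>

text \<open>A neighbourhood of the identity in \<open>\<T>\<^sup>\<int>\<close> leaves all but finitely many coordinates free,
  so after shifting far enough a point with a \<open>-1\<close> in a free coordinate has \<open>-1\<close> at \<open>0\<close>.\<close>
lemma shift_invariant_nbhd_contains_minus_one:
  assumes W: "openin torus_Z_top W" "(\<lambda>_. 1) \<in> W" "W \<subseteq> A"
    and inv: "\<And>y. y \<in> A \<Longrightarrow> shift_Z y \<in> A"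
  shows "\<exists>y\<in>A. y 0 = -1"
proof -
  obtain U where U: "finite {n. U n \<noteq> sphere 0 1}"
    "\<And>n. openin (subtopology euclidean (sphere (0::complex) 1)) (U n)"
    "(\<lambda>_. 1) \<in> PiE UNIV U" "PiE UNIV U \<subseteq> W"
    using torus_Z_basic_nbhd[OF W(1,2)] by blast
  have "finite (int -` {n. U n \<noteq> sphere 0 1})"
    using U(1) by (rule finite_vimageI) (simp add: inj_on_def)
  then obtain m :: nat where "m \<notin> int -` {n. U n \<noteq> sphere 0 1}"
    using ex_new_if_finite[OF infinite_UNIV_nat] by blast
  then have m: "U (int m) = sphere 0 1" by simp
  define y where "y = (\<lambda>n::int. if n = int m then -1 else (1::complex))"
  have "y \<in> PiE UNIV U"
    using U(3) m by (auto simp: y_def PiE_iff)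
  then have "y \<in> A" using U(4) W(3) by blast
  have iterate: "(shift_Z ^^ j) z \<in> A" if "z \<in> A" for z j
    using that by (induction j) (auto intro: inv)
  have "(shift_Z ^^ m) y \<in> A" using iterate \<open>y \<in> A\<close> .
  moreover have "(shift_Z ^^ m) y 0 = -1"
    by (simp add: funpow_shift_Z y_def)
  ultimately show ?thesis by blast
qed

lemma SIN_group_no_inner_shift:
  assumes "group H" and SIN: "SIN_group H T"
    and hom: "\<phi> \<in> hom torus_Z H" and emb: "embedding_map torus_Z_top T \<phi>"
    and t: "t \<in> carrier H"
    and conj: "\<And>y. y \<in> carrier torus_Z \<Longrightarrow> t \<otimes>\<^bsub>H\<^esub> \<phi> y \<otimes>\<^bsub>H\<^esub> inv\<^bsub>H\<^esub> t = \<phi> (shift_Z y)"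
  shows False
proof -
  define G where "G = carrier torus_Z"
  have homeo: "homeomorphic_map torus_Z_top (subtopology T (\<phi> ` G)) \<phi>"
    using emb by (simp add: embedding_map_def topspace_torus_Z G_def)
  have cont: "continuous_map torus_Z_top T \<phi>"
    using homeomorphic_imp_continuous_map[OF homeo] continuous_map_in_subtopology by blast
  have inj: "inj_on \<phi> G"
    using homeomorphic_imp_injective_map[OF homeo] by (simp add: topspace_torus_Z G_def)
  have one: "\<phi> (\<lambda>_. 1) = \<one>\<^bsub>H\<^esub>" and one_G: "(\<lambda>_. 1) \<in> G"
    using hom_one[OF hom group_torus_Z \<open>group H\<close>] by (auto simp: one_torus_Z G_def carrier_torus_Z)
  txt \<open>The points with positive real part at coordinate 0 form an open identity neighbourhood
    \<open>P\<close> of \<open>\<T>\<^sup>\<int>\<close>; its image is cut out of \<open>\<phi>(G)\<close> by an open set \<open>W\<close> of \<open>H\<close>.\<close>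
  define P where "P = {y \<in> topspace torus_Z_top. y 0 \<in> {z. Re z > 0} \<inter> sphere 0 1}"
  have "openin torus_Z_top P" unfolding P_def
  proof (rule openin_continuous_map_preimage)
    show "continuous_map torus_Z_top (subtopology euclidean (sphere (0::complex) 1)) (\<lambda>y. y 0)"
      unfolding torus_Z_top_def by (rule continuous_map_product_projection) simp
    show "openin (subtopology euclidean (sphere (0::complex) 1)) ({z. Re z > 0} \<inter> sphere 0 1)"
      by (auto simp: openin_subtopology intro!: exI[of _ "{z. Re z > 0}"] open_halfspace_Re_gt)
  qed
  then have "openin (subtopology T (\<phi> ` G)) (\<phi> ` P)"
    using homeomorphic_imp_open_map[OF homeo] by (simp add: open_map_def)
  then obtain W where W: "openin T W" "\<phi> ` P = W \<inter> \<phi> ` G"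
    by (auto simp: openin_subtopology)
  have "(\<lambda>_. 1) \<in> P" using one_G by (simp add: P_def topspace_torus_Z G_def)
  then have "\<phi> (\<lambda>_. 1) \<in> W \<inter> \<phi> ` G" unfolding W(2)[symmetric] by (rule imageI)
  then have "\<one>\<^bsub>H\<^esub> \<in> W" using one by simp
  then have "nbhd_one H T W" unfolding nbhd_one_def using W(1) by blast
  then have "\<exists>V. nbhd_one H T V \<and> V \<subseteq> W \<and>
      (\<forall>g\<in>carrier H. (\<lambda>v. g \<otimes>\<^bsub>H\<^esub> v \<otimes>\<^bsub>H\<^esub> inv\<^bsub>H\<^esub> g) ` V = V)"
    using SIN openin_subset[OF W(1)] unfolding SIN_group_def by simp
  then obtain V where V: "nbhd_one H T V" "V \<subseteq> W"
    "\<forall>g\<in>carrier H. (\<lambda>v. g \<otimes>\<^bsub>H\<^esub> v \<otimes>\<^bsub>H\<^esub> inv\<^bsub>H\<^esub> g) ` V = V"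
    by blast
  have V_conj: "t \<otimes>\<^bsub>H\<^esub> v \<otimes>\<^bsub>H\<^esub> inv\<^bsub>H\<^esub> t \<in> V" if "v \<in> V" for v
  proof -
    have "t \<otimes>\<^bsub>H\<^esub> v \<otimes>\<^bsub>H\<^esub> inv\<^bsub>H\<^esub> t \<in> (\<lambda>v. t \<otimes>\<^bsub>H\<^esub> v \<otimes>\<^bsub>H\<^esub> inv\<^bsub>H\<^esub> t) ` V"
      using that by (rule imageI)
    then show ?thesis using V(3) t by simp
  qed
  obtain V0 where V0: "openin T V0" "\<one>\<^bsub>H\<^esub> \<in> V0" "V0 \<subseteq> V"
    using V(1) unfolding nbhd_one_def by blast
  txt \<open>Its preimage in \<open>\<T>\<^sup>\<int>\<close> is a shift-invariant identity neighbourhood.\<close>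
  define A where "A = {y \<in> G. \<phi> y \<in> V}"
  define A0 where "A0 = {y \<in> topspace torus_Z_top. \<phi> y \<in> V0}"
  have "openin torus_Z_top A0"
    unfolding A0_def by (rule openin_continuous_map_preimage[OF cont V0(1)])
  moreover have "(\<lambda>_. 1) \<in> A0"
    using one_G one V0(2) by (simp add: A0_def topspace_torus_Z G_def)
  moreover have "A0 \<subseteq> A"
    unfolding A_def A0_def topspace_torus_Z G_def using V0(3) by blast
  moreover have "shift_Z y \<in> A" if "y \<in> A" for y
  proof -
    have y: "y \<in> G" "\<phi> y \<in> V" using that by (auto simp: A_def)
    have "\<phi> (shift_Z y) = t \<otimes>\<^bsub>H\<^esub> \<phi> y \<otimes>\<^bsub>H\<^esub> inv\<^bsub>H\<^esub> t"
      using conj y(1) by (simp add: G_def)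
    then have "\<phi> (shift_Z y) \<in> V" using V_conj[OF y(2)] by simp
    then show ?thesis using y(1) shift_Z_carrier by (simp add: A_def G_def)
  qed
  ultimately obtain y where y: "y \<in> A" "y 0 = -1"
    using shift_invariant_nbhd_contains_minus_one[of A0 A] by blast
  txt \<open>But every point of \<open>A\<close> lies in \<open>P\<close>.\<close>
  then have "\<phi> y \<in> \<phi> ` P" using W(2) V(2) by (auto simp: A_def)
  then have "y \<in> P" using inj y(1) by (auto simp: A_def P_def topspace_torus_Z G_def inj_on_def)
  with y(2) show False by (simp add: P_def)
qed

theorem mainTheorem18:
  fixes a :: "int \<Rightarrow> real"
  assumes "Q_indep_with_one a"
  shows "\<not> (\<exists>(H :: 'h monoid) (T :: 'h topology) (\<phi> :: (int \<Rightarrow> complex) \<Rightarrow> 'h) t.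
            topological_group H T \<and> metrizable_space T \<and> SIN_group H T \<and>
            \<phi> \<in> hom torus_Z H \<and> embedding_map torus_Z_top T \<phi> \<and>
            t \<in> carrier H \<and>
            t \<otimes>\<^bsub>H\<^esub> \<phi> (\<lambda>n. to_circle (a n)) \<otimes>\<^bsub>H\<^esub> inv\<^bsub>H\<^esub> t
              = \<phi> (shift_Z (\<lambda>n. to_circle (a n))))"
proof
  assume "\<exists>(H :: 'h monoid) (T :: 'h topology) (\<phi> :: (int \<Rightarrow> complex) \<Rightarrow> 'h) t.
            topological_group H T \<and> metrizable_space T \<and> SIN_group H T \<and>
            \<phi> \<in> hom torus_Z H \<and> embedding_map torus_Z_top T \<phi> \<and>
            t \<in> carrier H \<and>
            t \<otimes>\<^bsub>H\<^esub> \<phi> (\<lambda>n. to_circle (a n)) \<otimes>\<^bsub>H\<^esub> inv\<^bsub>H\<^esub> t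
              = \<phi> (shift_Z (\<lambda>n. to_circle (a n)))"
  then obtain H :: "'h monoid" and T \<phi> t where
    TG: "topological_group H T" and MT: "metrizable_space T" and SIN: "SIN_group H T"
    and hom: "\<phi> \<in> hom torus_Z H" and emb: "embedding_map torus_Z_top T \<phi>"
    and t: "t \<in> carrier H"
    and conj_x: "t \<otimes>\<^bsub>H\<^esub> \<phi> (\<lambda>n. to_circle (a n)) \<otimes>\<^bsub>H\<^esub> inv\<^bsub>H\<^esub> t
              = \<phi> (shift_Z (\<lambda>n. to_circle (a n)))"
    by blast
  define c where "c = (\<lambda>g. t \<otimes>\<^bsub>H\<^esub> g \<otimes>\<^bsub>H\<^esub> inv\<^bsub>H\<^esub> t)"
  have "group H" using TG by (simp add: topological_group_def)
  have cont: "continuous_map torus_Z_top T \<phi>"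
    using emb embedding_map_def homeomorphic_imp_continuous_map continuous_map_in_subtopology by blast
  txt \<open>Conjugation by \<open>t\<close> agrees with the shift at \<open>x\<close>, hence on all of \<open>\<T>\<^sup>\<int>\<close> by density.\<close>
  have "(c \<circ> \<phi>) y = (\<phi> \<circ> shift_Z) y" if "y \<in> carrier torus_Z" for y
  proof (rule continuous_homs_agree_on_dense_cyclic[OF group_torus_Z \<open>group H\<close> _ _ _ _ _ _
        dense_cyclic_subgroup[OF assms]])
    show "c \<circ> \<phi> \<in> hom torus_Z H" "\<phi> \<circ> shift_Z \<in> hom torus_Z H"
      using hom_compose[OF hom] hom_compose[OF shift_Z_hom hom]
        conjugation_hom[OF \<open>group H\<close> t] by (auto simp: c_def)
    show "continuous_map torus_Z_top T (c \<circ> \<phi>)" "continuous_map torus_Z_top T (\<phi> \<circ> shift_Z)"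
      using continuous_map_compose[OF cont] continuous_map_compose[OF shift_Z_continuous cont]
        conjugation_continuous[OF TG t] by (auto simp: c_def)
    show "Hausdorff_space T" using MT by (rule metrizable_imp_Hausdorff_space)
    show "(\<lambda>n. to_circle (a n)) \<in> carrier torus_Z" by (simp add: carrier_torus_Z)
    show "(c \<circ> \<phi>) (\<lambda>n. to_circle (a n)) = (\<phi> \<circ> shift_Z) (\<lambda>n. to_circle (a n))"
      using conj_x by (simp add: c_def)
    show "y \<in> topspace torus_Z_top" using that by (simp add: topspace_torus_Z)
  qed
  then show False
    using SIN_group_no_inner_shift[OF \<open>group H\<close> SIN hom emb t] by (simp add: c_def)
qed

end
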